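(* Let $\mathrm{Cl}_{p,q}$ be a non-degenerate real Clifford algebra with generators $e_1,\dots,e_n$, $n=p+q$, with extended basis $\mathbf{B}$, multiplication table $\mathbf{M}$, diagonal scalar-product matrix $\mathbf{G}$, coefficient maps $C_S$ and canonical matrix map $\pi$ as defined below. Define $g$ as left multiplication by $\mathbf{G}$, $g(\mathbf{X})=\mathbf{G}\mathbf{X}$. Then for every fixed multi-index $S$ (i.e. $e_S\in\mathbf{B}$), \[ \pi(e_S)=C_S(g(\mathbf{M}))=g(C_S(\mathbf{M})), \] i.e. $\pi=C_S\circ g=g\circ C_S$ on $\mathbf{M}$. Furthermore, $\pi$ (extended linearly) is an isomorphism of $\mathrm{Cl}_{p,q}$ onto its image in $\mathbf{Mat}_{\mathbb{R}}(2^n\times 2^n)$, with inverse $\pi^{-1}$ on that image, thereby inducing a representation of $\mathrm{Cl}_{p,q}$ in the real matrix algebra $\mathbf{Mat}_{\mathbb{R}}(2^n\times 2^n)$.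
   Context: Generators satisfy $e_ie_j=-e_je_i$ ($i\ne j$) and $e_i^2=\sigma_i\in\{1,-1\}$. For $S=(s_1<\dots<s_m)\subseteq\{1,\dots,n\}$, $e_S=e_{s_1}\cdots e_{s_m}$, $e_\emptyset=1$. $\mathbf{B}$ is the list of all $2^n$ blades ordered by a fixed total order $\prec$ extending $e_i\prec e_j$ for $i<j$, with $1$ first. For blades, $e_Me_N=m_{MN}e_{M\triangle N}$ with $m_{MN}\in\{\pm1\}$; $\mathbf{M}=(e_Me_N)_{M,N}$ is the $2^n\times2^n$ multiplication table (entries in the algebra). $C_S$ acts entrywise on such arrays, sending $x\,e_U$ to $x$ if $U=S$ and to $0$ otherwise. $\mathbf{G}=\mathrm{diag}(\sigma_M)$ with $\sigma_M=\langle e_Me_M\rangle_0\in\{\pm1\}$. The canonical matrix map is $\pi(e_S)=\mathbf{E}_S:=\mathbf{G}\,C_S(\mathbf{M})$, extended linearly. *)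

theory Defs
  imports Complex_Main "Jordan_Normal_Form.Matrix"
begin

definition blade :: "(nat \<Rightarrow> 'a::monoid_mult) \<Rightarrow> nat set \<Rightarrow> 'a" where
  "blade e S = prod_list (map e (sorted_list_of_set S))"

definition clifford_pq :: "nat \<Rightarrow> nat \<Rightarrow> nat \<Rightarrow> (nat \<Rightarrow> real) \<Rightarrow> (nat \<Rightarrow> 'a::real_algebra_1) \<Rightarrow> bool" where
  "clifford_pq p q n \<sigma> e \<longleftrightarrow>
     n = p + q \<and>
     (\<forall>i\<in>{1..n}. \<sigma> i = 1 \<or> \<sigma> i = -1) \<and>
     card {i\<in>{1..n}. \<sigma> i = 1} = p \<and> card {i\<in>{1..n}. \<sigma> i = -1} = q \<and>
     (\<forall>i\<in>{1..n}. \<forall>j\<in>{1..n}. i \<noteq> j \<longrightarrow> e i * e j = - (e j * e i)) \<and>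
     (\<forall>i\<in>{1..n}. e i * e i = of_real (\<sigma> i)) \<and>
     inj_on (blade e) (Pow {1..n}) \<and>
     independent (blade e ` Pow {1..n}) \<and>
     span (blade e ` Pow {1..n}) = UNIV"

text \<open>The list B of blades: bl k is the multi-index of the k-th blade (k < 2^n) in a fixed
  total order extending e_i \<prec> e_j for i < j, with 1 first.\<close>
definition blade_order :: "nat \<Rightarrow> (nat \<Rightarrow> nat set) \<Rightarrow> bool" where
  "blade_order n bl \<longleftrightarrow>
     bij_betw bl {..<2^n} (Pow {1..n}) \<and> bl 0 = {} \<and>
     (\<forall>a<2^n. \<forall>b<2^n. \<forall>i j. bl a = {i} \<and> bl b = {j} \<and> i < j \<longrightarrow> a < b)"

definition coef :: "nat \<Rightarrow> (nat \<Rightarrow> 'a::real_algebra_1) \<Rightarrow> nat set \<Rightarrow> 'a \<Rightarrow> real" where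
  "coef n e S x = representation (blade e ` Pow {1..n}) x (blade e S)"

definition mult_table :: "nat \<Rightarrow> (nat \<Rightarrow> nat set) \<Rightarrow> (nat \<Rightarrow> 'a::real_algebra_1) \<Rightarrow> 'a mat" where
  "mult_table n bl e = mat (2^n) (2^n) (\<lambda>(i,j). blade e (bl i) * blade e (bl j))"

definition coef_mat :: "nat \<Rightarrow> (nat \<Rightarrow> 'a::real_algebra_1) \<Rightarrow> nat set \<Rightarrow> 'a mat \<Rightarrow> real mat" where
  "coef_mat n e S X = map_mat (coef n e S) X"

definition sigma_blade :: "nat \<Rightarrow> (nat \<Rightarrow> 'a::real_algebra_1) \<Rightarrow> nat set \<Rightarrow> real" where
  "sigma_blade n e M = coef n e {} (blade e M * blade e M)"

definition Gmat :: "nat \<Rightarrow> (nat \<Rightarrow> nat set) \<Rightarrow> (nat \<Rightarrow> 'a::real_algebra_1) \<Rightarrow> real mat" where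
  "Gmat n bl e = mat (2^n) (2^n) (\<lambda>(i,j). if i = j then sigma_blade n e (bl i) else 0)"

definition g_alg :: "nat \<Rightarrow> (nat \<Rightarrow> nat set) \<Rightarrow> (nat \<Rightarrow> 'a::real_algebra_1) \<Rightarrow> 'a mat \<Rightarrow> 'a mat" where
  "g_alg n bl e X = mat (dim_row X) (dim_col X)
     (\<lambda>(i,j). \<Sum>k<dim_row X. (Gmat n bl e $$ (i,k)) *\<^sub>R (X $$ (k,j)))"

definition Emat :: "nat \<Rightarrow> (nat \<Rightarrow> nat set) \<Rightarrow> (nat \<Rightarrow> 'a::real_algebra_1) \<Rightarrow> nat set \<Rightarrow> real mat" where
  "Emat n bl e S = Gmat n bl e * coef_mat n e S (mult_table n bl e)"

definition pimap :: "nat \<Rightarrow> (nat \<Rightarrow> nat set) \<Rightarrow> (nat \<Rightarrow> 'a::real_algebra_1) \<Rightarrow> 'a \<Rightarrow> real mat" where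
  "pimap n bl e x = mat (2^n) (2^n)
     (\<lambda>(i,j). \<Sum>S\<in>Pow {1..n}. coef n e S x * (Emat n bl e S $$ (i,j)))"

end

(* Left multiplication by a blade e_M permutes the blades up to sign, e_M e_N = +-e_(M xor N),
   and squares to sigma_M = +-1; so its coefficient matrix P is a signed permutation matrix with
   P^2 = sigma_M, i.e. P^T = sigma_M P.  Unfolding pi with this symmetry shows that, writing B_i for
   the i-th multi-index, the (i,j) entry of pi(x) is the coefficient of e_(B_j) in e_(B_i) x.  So
   pi(x) is the transposed matrix of right multiplication by x, hence pi is an algebra
   homomorphism, and the row of pi(x) belonging to e_{} = 1 lists the coefficients of x, hence pi
   is injective.  The identity C_S(G M) = G C_S(M) is just linearity of C_S. *)

theory Submission
  imports Defs
begin

lemma blade_empty [simp]: "blade e {} = 1"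
  by (simp add: blade_def)

lemma blade_insert_min:
  assumes "finite T" "\<forall>t\<in>T. x < t"
  shows "blade e (insert x T) = e x * blade e T"
proof -
  have "Min (insert x T) = x" "insert x T - {x} = T"
    using assms by (auto intro: Min_insert2 less_imp_le)
  then have "sorted_list_of_set (insert x T) = x # sorted_list_of_set T"
    using sorted_list_of_set_nonempty[of "insert x T"] assms(1) by simp
  then show ?thesis by (simp add: blade_def)
qed

locale clifford_generators =
  fixes n :: nat and \<sigma> :: "nat \<Rightarrow> real" and e :: "nat \<Rightarrow> 'a::real_algebra_1"
  assumes anticommute: "\<lbrakk>i \<in> {1..n}; j \<in> {1..n}; i \<noteq> j\<rbrakk> \<Longrightarrow> e i * e j = - (e j * e i)"
    and square: "i \<in> {1..n} \<Longrightarrow> e i * e i = of_real (\<sigma> i)"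
    and square_sign: "i \<in> {1..n} \<Longrightarrow> \<sigma> i \<in> {1, -1}"
begin

lemma generator_mult_blade:
  assumes "x \<in> {1..n}" "T \<subseteq> {1..n}"
  shows "\<exists>c\<in>{1, -1}. e x * blade e T = c *\<^sub>R blade e (sym_diff T {x})"
proof -
  have "finite T" using assms(2) finite_subset by blast
  then show ?thesis using assms(2)
  proof (induction T rule: finite_linorder_min_induct)
    case empty
    show ?case using blade_insert_min[of "{}" x e] by (intro bexI[of _ 1]) auto
  next
    case (insert b A)
    consider "x < b" | "x = b" | "b < x" by linarith
    then show ?case
    proof cases
      case 1
      then have "sym_diff (insert b A) {x} = insert x (insert b A)" "\<forall>t\<in>insert b A. x < t"
        using insert.hyps(2) by auto
      then show ?thesis using blade_insert_min[of "insert b A" x e] insert.hyps(1)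
        by (intro bexI[of _ 1]) auto
    next
      case 2
      have "e x * blade e (insert b A) = (e b * e b) * blade e A"
        using 2 insert.hyps by (simp add: blade_insert_min mult.assoc)
      moreover have "sym_diff (insert b A) {x} = A" using 2 insert.hyps(2) by auto
      ultimately show ?thesis
        using square[of b] square_sign[of b] insert.prems
        by (intro bexI[of _ "\<sigma> b"]) (auto simp: scaleR_conv_of_real)
    next
      case 3
      have "A \<subseteq> {1..n}" using insert.prems by simp
      then obtain c where c: "c \<in> {1, -1}" "e x * blade e A = c *\<^sub>R blade e (sym_diff A {x})"
        using insert.IH by blast
      have "e x * blade e (insert b A) = - (e b * (e x * blade e A))"
        using 3 insert.hyps insert.prems assms(1) anticommute[of x b]
        by (simp add: blade_insert_min mult.assoc[symmetric])
      also have "\<dots> = (- c) *\<^sub>R (e b * blade e (sym_diff A {x}))"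
        using c(2) by simp
      also have "e b * blade e (sym_diff A {x}) = blade e (sym_diff (insert b A) {x})"
        using 3 insert.hyps
        by (subst blade_insert_min[symmetric]) (auto intro: arg_cong[where f="blade e"])
      finally show ?thesis using c(1) by (intro bexI[of _ "- c"]) auto
    qed
  qed
qed

lemma blade_mult:
  assumes "M \<subseteq> {1..n}" "N \<subseteq> {1..n}"
  shows "\<exists>c\<in>{1, -1}. blade e M * blade e N = c *\<^sub>R blade e (sym_diff M N)"
proof -
  have "finite M" using assms(1) finite_subset by blast
  then show ?thesis using assms(1)
  proof (induction M rule: finite_linorder_min_induct)
    case empty
    show ?case by (intro bexI[of _ 1]) auto
  next
    case (insert b A)
    have "A \<subseteq> {1..n}" using insert.prems by simp
    then obtain c where c: "c \<in> {1, -1}" "blade e A * blade e N = c *\<^sub>R blade e (sym_diff A N)"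
      using insert.IH by blast
    have "sym_diff A N \<subseteq> {1..n}" "b \<in> {1..n}" using insert.prems assms(2) by auto
    then obtain d where d: "d \<in> {1, -1}"
      "e b * blade e (sym_diff A N) = d *\<^sub>R blade e (sym_diff (sym_diff A N) {b})"
      using generator_mult_blade by blast
    have "blade e (insert b A) * blade e N = e b * (blade e A * blade e N)"
      using insert.hyps by (simp add: blade_insert_min mult.assoc)
    also have "\<dots> = (c * d) *\<^sub>R blade e (sym_diff (sym_diff A N) {b})"
      using c(2) d(2) by simp
    also have "sym_diff (sym_diff A N) {b} = sym_diff (insert b A) N"
      using insert.hyps by auto
    finally show ?case using c(1) d(1) by (intro bexI[of _ "c * d"]) auto
  qed
qed

end

locale clifford_basis = clifford_generators +
  assumes blade_inj: "inj_on (blade e) (Pow {1..n})"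
    and blade_independent: "independent (blade e ` Pow {1..n})"
    and blade_span: "span (blade e ` Pow {1..n}) = UNIV"
begin

lemma coef_add: "coef n e S (x + y) = coef n e S x + coef n e S y"
  unfolding coef_def using real_vector.representation_add[OF blade_independent] blade_span
  by simp

lemma coef_scaleR: "coef n e S (c *\<^sub>R x) = c * coef n e S x"
  unfolding coef_def using real_vector.representation_scale[OF blade_independent] blade_span
  by simp

lemma coef_sum: "coef n e S (\<Sum>i\<in>I. f i) = (\<Sum>i\<in>I. coef n e S (f i))"
  unfolding coef_def using real_vector.representation_sum[OF blade_independent, of I f] blade_span
  by simp

lemma coef_blade:
  assumes "S \<subseteq> {1..n}" "T \<subseteq> {1..n}"
  shows "coef n e S (blade e T) = (if S = T then 1 else 0)"
  unfolding coef_def using real_vector.representation_basis[OF blade_independent] assms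
  by (auto simp: inj_on_eq_iff[OF blade_inj])

lemma blade_expansion: "(\<Sum>S\<in>Pow {1..n}. coef n e S x *\<^sub>R blade e S) = x"
proof -
  have "(\<Sum>b\<in>blade e ` Pow {1..n}. representation (blade e ` Pow {1..n}) x b *\<^sub>R b) = x"
    by (rule real_vector.sum_representation_eq[OF blade_independent]) (use blade_span in auto)
  then show ?thesis unfolding coef_def sum.reindex[OF blade_inj] comp_def .
qed

lemma blade_square:
  assumes "M \<subseteq> {1..n}"
  shows "blade e M * blade e M = sigma_blade n e M *\<^sub>R 1" "sigma_blade n e M \<in> {1, -1}"
proof -
  obtain c where c: "c \<in> {1, -1}" "blade e M * blade e M = c *\<^sub>R blade e (sym_diff M M)"
    using blade_mult[OF assms assms] by blast
  then have "blade e M * blade e M = c *\<^sub>R 1" by simp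
  moreover have "sigma_blade n e M = c"
    using calculation coef_blade[of "{}" "{}"] by (simp add: sigma_blade_def coef_scaleR)
  ultimately show "blade e M * blade e M = sigma_blade n e M *\<^sub>R 1" "sigma_blade n e M \<in> {1, -1}"
    using c(1) by simp_all
qed

lemma sigma_blade_mult_coef_swap:
  assumes M: "M \<subseteq> {1..n}" and N: "N \<subseteq> {1..n}" and S: "S \<subseteq> {1..n}"
  shows "sigma_blade n e M * coef n e S (blade e M * blade e N)
    = coef n e N (blade e M * blade e S)"
proof -
  obtain c where c: "c \<in> {1, -1}" "blade e M * blade e S = c *\<^sub>R blade e (sym_diff M S)"
    using blade_mult[OF M S] by blast
  have MS: "sym_diff M S \<subseteq> {1..n}" using M S by auto
  show ?thesis
  proof (cases "N = sym_diff M S")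
    case True
    have "sigma_blade n e M *\<^sub>R blade e S = blade e M * (blade e M * blade e S)"
      using blade_square(1)[OF M] by (simp add: mult.assoc[symmetric])
    also have "\<dots> = c *\<^sub>R (blade e M * blade e N)"
      using c(2) True by simp
    finally have "blade e M * blade e N = (c * sigma_blade n e M) *\<^sub>R blade e S"
      using c(1) by (auto simp: algebra_simps)
    then show ?thesis
      using True c blade_square(2)[OF M] coef_blade[OF S S] coef_blade[OF N MS]
      by (auto simp: coef_scaleR)
  next
    case False
    obtain d where "blade e M * blade e N = d *\<^sub>R blade e (sym_diff M N)"
      using blade_mult[OF M N] by blast
    moreover have "sym_diff M N \<subseteq> {1..n}" "S \<noteq> sym_diff M N" using M N False by auto
    ultimately show ?thesis
      using False c(2) coef_blade[OF S] coef_blade[OF N MS] by (simp add: coef_scaleR)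
  qed
qed

lemma coef_mat_g_alg:
  assumes "dim_row X = 2^n"
  shows "coef_mat n e S (g_alg n bl e X) = Gmat n bl e * coef_mat n e S X"
  by (rule eq_matI) (use assms in \<open>simp_all add: g_alg_def coef_mat_def Gmat_def index_mult_mat
      scalar_prod_def coef_sum coef_scaleR atLeast0LessThan\<close>)

end

lemma dim_Emat [simp]: "dim_row (Emat n bl e S) = 2^n" "dim_col (Emat n bl e S) = 2^n"
  by (simp_all add: Emat_def Gmat_def coef_mat_def mult_table_def)

lemma index_Gmat_mult:
  assumes "i < 2^n" "j < dim_col X" "dim_row X = 2^n"
  shows "(Gmat n bl e * X) $$ (i, j) = sigma_blade n e (bl i) * X $$ (i, j)"
proof -
  have "\<And>k. (if i = k then sigma_blade n e (bl i) else 0) * X $$ (k, j)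
      = (if i = k then sigma_blade n e (bl i) * X $$ (k, j) else 0)"
    by simp
  with assms show ?thesis by (simp add: index_mult_mat scalar_prod_def Gmat_def)
qed

locale indexed_clifford_basis = clifford_basis +
  fixes bl :: "nat \<Rightarrow> nat set"
  assumes bl_bij: "bij_betw bl {..<2^n} (Pow {1..n})"
begin

lemma bl_subset: "i < 2^n \<Longrightarrow> bl i \<subseteq> {1..n}"
  using bl_bij bij_betwE by blast

lemma bl_eq_iff: "i < 2^n \<Longrightarrow> j < 2^n \<Longrightarrow> bl i = bl j \<longleftrightarrow> i = j"
  using bl_bij unfolding bij_betw_def inj_on_def by blast

lemma blade_expansion_indexed: "(\<Sum>k<2^n. coef n e (bl k) x *\<^sub>R blade e (bl k)) = x"
  using sum.reindex_bij_betw[OF bl_bij, of "\<lambda>S. coef n e S x *\<^sub>R blade e S"] blade_expansion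
  by simp

lemma dim_pimap [simp]: "dim_row (pimap n bl e x) = 2^n" "dim_col (pimap n bl e x) = 2^n"
  by (simp_all add: pimap_def)

lemma index_Emat:
  assumes "i < 2^n" "j < 2^n" "S \<subseteq> {1..n}"
  shows "Emat n bl e S $$ (i, j) = coef n e (bl j) (blade e (bl i) * blade e S)"
  using assms sigma_blade_mult_coef_swap[OF bl_subset bl_subset assms(3)]
  by (simp add: Emat_def index_Gmat_mult coef_mat_def mult_table_def)

lemma index_pimap:
  assumes i: "i < 2^n" and j: "j < 2^n"
  shows "pimap n bl e x $$ (i, j) = coef n e (bl j) (blade e (bl i) * x)"
proof -
  have "pimap n bl e x $$ (i, j)
      = (\<Sum>S\<in>Pow {1..n}. coef n e S x * coef n e (bl j) (blade e (bl i) * blade e S))"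
    using i j by (simp add: pimap_def index_Emat)
  also have "\<dots> = coef n e (bl j) (blade e (bl i) * (\<Sum>S\<in>Pow {1..n}. coef n e S x *\<^sub>R blade e S))"
    by (simp add: sum_distrib_left coef_sum coef_scaleR)
  finally show ?thesis by (simp only: blade_expansion)
qed

lemma pimap_blade:
  assumes "S \<subseteq> {1..n}"
  shows "pimap n bl e (blade e S) = Emat n bl e S"
  by (rule eq_matI) (simp_all add: index_pimap index_Emat[OF _ _ assms])

lemma pimap_add: "pimap n bl e (x + y) = pimap n bl e x + pimap n bl e y"
  by (rule eq_matI) (simp_all add: index_pimap distrib_left coef_add)

lemma pimap_scaleR: "pimap n bl e (c *\<^sub>R x) = smult_mat c (pimap n bl e x)"
  by (rule eq_matI) (simp_all add: index_pimap coef_scaleR)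

lemma pimap_mult: "pimap n bl e (x * y) = pimap n bl e x * pimap n bl e y"
proof (rule eq_matI)
  fix i j
  assume "i < dim_row (pimap n bl e x * pimap n bl e y)" "j < dim_col (pimap n bl e x * pimap n bl e y)"
  then have i: "i < 2^n" and j: "j < 2^n" by simp_all
  have "(pimap n bl e x * pimap n bl e y) $$ (i, j)
      = (\<Sum>k<2^n. coef n e (bl k) (blade e (bl i) * x) * coef n e (bl j) (blade e (bl k) * y))"
    using i j by (simp add: index_mult_mat scalar_prod_def index_pimap atLeast0LessThan)
  also have "\<dots> = coef n e (bl j)
      ((\<Sum>k<2^n. coef n e (bl k) (blade e (bl i) * x) *\<^sub>R blade e (bl k)) * y)"
    by (simp add: coef_sum coef_scaleR sum_distrib_right)
  also have "\<dots> = pimap n bl e (x * y) $$ (i, j)"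
    using i j by (simp add: blade_expansion_indexed index_pimap mult.assoc)
  finally show "pimap n bl e (x * y) $$ (i, j) = (pimap n bl e x * pimap n bl e y) $$ (i, j)" ..
qed simp_all

lemma pimap_one: "pimap n bl e 1 = one_mat (2^n)"
  by (rule eq_matI) (auto simp: index_pimap coef_blade[OF bl_subset bl_subset] bl_eq_iff)

lemma inj_pimap: "inj (pimap n bl e)"
proof (rule injI)
  fix x y assume eq: "pimap n bl e x = pimap n bl e y"
  obtain i where i: "i < 2^n" "bl i = {}"
    using bij_betw_imp_surj_on[OF bl_bij] by (metis Pow_bottom imageE lessThan_iff)
  have coef_eq: "coef n e (bl k) x = coef n e (bl k) y" if "k < 2^n" for k
    using index_pimap[OF i(1) that] i(2) eq by (metis blade_empty mult_1_left)
  have "x = (\<Sum>k<2^n. coef n e (bl k) x *\<^sub>R blade e (bl k))"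
    by (rule blade_expansion_indexed[symmetric])
  also have "\<dots> = (\<Sum>k<2^n. coef n e (bl k) y *\<^sub>R blade e (bl k))"
    using coef_eq by (intro sum.cong) auto
  also have "\<dots> = y"
    by (rule blade_expansion_indexed)
  finally show "x = y" .
qed

end

lemma clifford_pq_imp_clifford_basis:
  assumes "clifford_pq p q n \<sigma> e"
  shows "clifford_basis n \<sigma> e"
proof -
  have "(\<forall>i\<in>{1..n}. \<forall>j\<in>{1..n}. i \<noteq> j \<longrightarrow> e i * e j = - (e j * e i))
      \<and> (\<forall>i\<in>{1..n}. e i * e i = of_real (\<sigma> i)) \<and> (\<forall>i\<in>{1..n}. \<sigma> i \<in> {1, -1})
      \<and> inj_on (blade e) (Pow {1..n}) \<and> independent (blade e ` Pow {1..n})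
      \<and> span (blade e ` Pow {1..n}) = UNIV"
    using assms unfolding clifford_pq_def by blast
  then show ?thesis by unfold_locales blast+
qed

theorem theorem2:
  fixes e :: "nat \<Rightarrow> 'a::real_algebra_1" and \<sigma> :: "nat \<Rightarrow> real"
    and p q n :: nat and bl :: "nat \<Rightarrow> nat set"
  assumes "clifford_pq p q n \<sigma> e"
    and "blade_order n bl"
  shows "(\<forall>S\<in>Pow {1..n}.
            pimap n bl e (blade e S) = coef_mat n e S (g_alg n bl e (mult_table n bl e)) \<and>
            pimap n bl e (blade e S) = Gmat n bl e * coef_mat n e S (mult_table n bl e))
       \<and> (\<forall>x y. pimap n bl e (x + y) = pimap n bl e x + pimap n bl e y)
       \<and> (\<forall>c x. pimap n bl e (c *\<^sub>R x) = smult_mat c (pimap n bl e x))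
       \<and> (\<forall>x y. pimap n bl e (x * y) = pimap n bl e x * pimap n bl e y)
       \<and> pimap n bl e 1 = one_mat (2^n)
       \<and> inj (pimap n bl e)
       \<and> (\<forall>x. the_inv (pimap n bl e) (pimap n bl e x) = x)"
proof -
  interpret indexed_clifford_basis n \<sigma> e bl
    using clifford_pq_imp_clifford_basis[OF assms(1)] assms(2)
    by (simp add: indexed_clifford_basis_def indexed_clifford_basis_axioms_def blade_order_def)
  have "pimap n bl e (blade e S) = coef_mat n e S (g_alg n bl e (mult_table n bl e))
      \<and> pimap n bl e (blade e S) = Gmat n bl e * coef_mat n e S (mult_table n bl e)"
    if "S \<in> Pow {1..n}" for S
    using pimap_blade[of S] coef_mat_g_alg[of "mult_table n bl e" S] that
    by (simp add: Emat_def mult_table_def)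
  then show ?thesis
    using pimap_add pimap_scaleR pimap_mult pimap_one inj_pimap the_inv_f_f[OF inj_pimap]
    by blast
qed

end
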